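(* Let $\pi$ be an $r$-homogeneous strongly log-concave distribution with associated matroid $\mathcal{M}=(E,\mathcal{I})$ and weight function $w$, and let $I\in\mathcal{I}$ with $|I|\le r-2$. Let $f:E\setminus I\to\mathbb{R}$ be a function with $\mathbb{E}_{\pi_{I,1}}f=1$. Then $$f^{\top}W_I f\le w(I).$$
   Context: $\pi:2^{[n]}\to\mathbb{R}_{\ge0}$ has generating polynomial $g_\pi(x)=\sum_S\pi(S)\prod_{i\in S}x_i$; it is $r$-homogeneous if its support consists of $r$-sets; a polynomial with nonnegative coefficients is strongly log-concave if for every $J\subseteq[n]$, $\nabla^2\log(\partial_J p)$ is negative semidefinite at the all-ones vector; $\pi$ is strongly log-concave if $g_\pi$ is. The support $\mathcal{B}$ of such $\pi$ is the set of bases of a rank-$r$ matroid $\mathcal{M}=(E,\mathcal{I})$. Fix $Z_r>0$; weights: $w(I)=(r-|I|)!\,Z_r\sum_{B\in\mathcal{B},B\supseteq I}\pi(B)$ for $I\in\mathcal{I}$, and $w(I)=0$ for $I\notin\mathcal{I}$. The distribution $\pi_{I,1}$ on $E\setminus I$ is $\pi_{I,1}(v)=w(I\cup\{v\})/w(I)$ (supported on $v$ with $I\cup\{v\}\in\mathcal{I}$). $W_I$ is the matrix indexed by $E\setminus I$ with $(W_I)_{uv}=w(I\cup\{u,v\})$ for $u\ne v$ and zero diagonal. *)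

theory Defs
  imports Complex_Main
begin

text \<open>Ground set [n] = {1..n}. A function \<pi> on subsets of [n] is given as
  a function of type nat set => real; only its values on subsets of [n] matter.\<close>

definition ground :: "nat \<Rightarrow> nat set" where
  "ground n = {1..n}"

text \<open>Value at the all-ones vector of the partial derivative d_J g_pi
  (g_pi is multiaffine, so d_J g_pi = sum over S containing J of \<pi>(S) prod_{i in S-J} x_i).\<close>
definition derivJ :: "nat \<Rightarrow> (nat set \<Rightarrow> real) \<Rightarrow> nat set \<Rightarrow> real" where
  "derivJ n \<pi> J = (\<Sum>S\<in>{S. S \<subseteq> ground n \<and> J \<subseteq> S}. \<pi> S)"

definition grad1 :: "nat \<Rightarrow> (nat set \<Rightarrow> real) \<Rightarrow> nat set \<Rightarrow> nat \<Rightarrow> real" where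
  "grad1 n \<pi> J i = (if i \<in> J then 0 else derivJ n \<pi> (insert i J))"

text \<open>Hessian of d_J g_pi at the all-ones vector, (i,j) entry (multiaffine: zero diagonal).\<close>
definition hess1 :: "nat \<Rightarrow> (nat set \<Rightarrow> real) \<Rightarrow> nat set \<Rightarrow> nat \<Rightarrow> nat \<Rightarrow> real" where
  "hess1 n \<pi> J i j = (if i = j \<or> i \<in> J \<or> j \<in> J then 0
                       else derivJ n \<pi> (insert i (insert j J)))"

text \<open>Hessian of log (d_J g_pi) at the all-ones vector:
  (nabla^2 p)/p - (nabla p)(nabla p)^T / p^2.  If d_J g_pi is the zero polynomial
  (p(1) = 0, nonneg coefficients) this is the zero matrix by the convention x/0 = 0,
  so the condition is vacuous, as intended.\<close>
definition loghess :: "nat \<Rightarrow> (nat set \<Rightarrow> real) \<Rightarrow> nat set \<Rightarrow> nat \<Rightarrow> nat \<Rightarrow> real" where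
  "loghess n \<pi> J i j = hess1 n \<pi> J i j / derivJ n \<pi> J
      - grad1 n \<pi> J i * grad1 n \<pi> J j / (derivJ n \<pi> J)^2"

definition strongly_log_concave :: "nat \<Rightarrow> (nat set \<Rightarrow> real) \<Rightarrow> bool" where
  "strongly_log_concave n \<pi> \<longleftrightarrow>
     (\<forall>S. 0 \<le> \<pi> S) \<and>
     (\<forall>J \<subseteq> ground n. \<forall>v :: nat \<Rightarrow> real.
        (\<Sum>i\<in>ground n. \<Sum>j\<in>ground n. v i * loghess n \<pi> J i j * v j) \<le> 0)"

definition homogeneous :: "nat \<Rightarrow> nat \<Rightarrow> (nat set \<Rightarrow> real) \<Rightarrow> bool" where
  "homogeneous n r \<pi> \<longleftrightarrow> (\<forall>S. \<pi> S \<noteq> 0 \<longrightarrow> S \<subseteq> ground n \<and> card S = r)"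

definition bases :: "(nat set \<Rightarrow> real) \<Rightarrow> nat set set" where
  "bases \<pi> = {B. \<pi> B \<noteq> 0}"

definition indep :: "(nat set \<Rightarrow> real) \<Rightarrow> nat set \<Rightarrow> bool" where
  "indep \<pi> I \<longleftrightarrow> (\<exists>B\<in>bases \<pi>. I \<subseteq> B)"

definition weight :: "nat \<Rightarrow> nat \<Rightarrow> real \<Rightarrow> (nat set \<Rightarrow> real) \<Rightarrow> nat set \<Rightarrow> real" where
  "weight n r Z \<pi> I = (if indep \<pi> I then
      fact (r - card I) * Z * (\<Sum>B\<in>{B \<in> bases \<pi>. I \<subseteq> B}. \<pi> B) else 0)"

definition link_dist :: "nat \<Rightarrow> nat \<Rightarrow> real \<Rightarrow> (nat set \<Rightarrow> real) \<Rightarrow> nat set \<Rightarrow> nat \<Rightarrow> real" where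
  "link_dist n r Z \<pi> I v = weight n r Z \<pi> (insert v I) / weight n r Z \<pi> I"

definition expect_link :: "nat \<Rightarrow> nat \<Rightarrow> real \<Rightarrow> (nat set \<Rightarrow> real) \<Rightarrow> nat set \<Rightarrow> (nat \<Rightarrow> real) \<Rightarrow> real" where
  "expect_link n r Z \<pi> I f = (\<Sum>v\<in>ground n - I. link_dist n r Z \<pi> I v * f v)"

definition Wmat :: "nat \<Rightarrow> nat \<Rightarrow> real \<Rightarrow> (nat set \<Rightarrow> real) \<Rightarrow> nat set \<Rightarrow> nat \<Rightarrow> nat \<Rightarrow> real" where
  "Wmat n r Z \<pi> I u v = (if u = v then 0 else weight n r Z \<pi> (insert u (insert v I)))"

definition quad_W :: "nat \<Rightarrow> nat \<Rightarrow> real \<Rightarrow> (nat set \<Rightarrow> real) \<Rightarrow> nat set \<Rightarrow> (nat \<Rightarrow> real) \<Rightarrow> real" where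
  "quad_W n r Z \<pi> I f = (\<Sum>u\<in>ground n - I. \<Sum>v\<in>ground n - I. f u * Wmat n r Z \<pi> I u v * f v)"

end

theory Submission imports Defs begin

text \<open>Since w(X) = (r - |X|)! Z d_X g(1), the claim is a statement about the derivatives
  p = d_I g(1), a_i = d_i d_I g(1) and H_ij = d_i d_j d_I g(1), with k = r - |I|: the normalisation
  of f reads a^T f = k p, and we need f^T H f <= k (k - 1) p. Euler's identity for the homogeneous
  polynomials d_I g and d_i d_I g gives sum_i a_i = k p and sum_j H_ij = (k - 1) a_i. Writing
  f = 1 + d, this yields a^T d = 0 and f^T H f = k (k - 1) p + d^T H d, while strong log-concavity
  at I says p d^T H d <= (a^T d)^2 = 0.\<close>

lemma finite_supersets_in_ground: "finite {S. S \<subseteq> ground n \<and> J \<subseteq> S}"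
  by (rule finite_subset[of _ "Pow (ground n)"]) (auto simp: ground_def)

lemma weight_eq_derivJ:
  assumes hom: "homogeneous n r \<pi>"
  shows "weight n r Z \<pi> X = fact (r - card X) * Z * derivJ n \<pi> X"
proof -
  have "{B \<in> bases \<pi>. X \<subseteq> B} \<subseteq> {S. S \<subseteq> ground n \<and> X \<subseteq> S}"
    using hom by (auto simp: bases_def homogeneous_def)
  then have eq: "(\<Sum>B\<in>{B \<in> bases \<pi>. X \<subseteq> B}. \<pi> B) = derivJ n \<pi> X"
    unfolding derivJ_def
    by (rule sum.mono_neutral_left[OF finite_supersets_in_ground]) (auto simp: bases_def)
  show ?thesis
  proof (cases "indep \<pi> X")
    case False
    then have "{B \<in> bases \<pi>. X \<subseteq> B} = {}" by (auto simp: indep_def)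
    with eq False show ?thesis by (simp add: weight_def)
  qed (simp add: weight_def eq)
qed

lemma derivJ_pos_if_indep:
  assumes hom: "homogeneous n r \<pi>" and nonneg: "\<And>S. 0 \<le> \<pi> S" and "indep \<pi> J"
  shows "0 < derivJ n \<pi> J"
proof -
  obtain B where B: "\<pi> B \<noteq> 0" "J \<subseteq> B" using \<open>indep \<pi> J\<close> by (auto simp: indep_def bases_def)
  have "B \<subseteq> ground n" using B hom by (auto simp: homogeneous_def)
  have "\<pi> B \<le> derivJ n \<pi> J"
    unfolding derivJ_def
    by (rule member_le_sum) (use B \<open>B \<subseteq> ground n\<close> nonneg finite_supersets_in_ground in auto)
  with B nonneg[of B] show ?thesis by linarith
qed

lemma sum_derivJ_insert:
  assumes hom: "homogeneous n r \<pi>"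
  shows "(\<Sum>v\<in>ground n - J. derivJ n \<pi> (insert v J)) = real (r - card J) * derivJ n \<pi> J"
proof -
  define A where "A = {S. S \<subseteq> ground n \<and> J \<subseteq> S}"
  have finA: "finite A" unfolding A_def by (rule finite_supersets_in_ground)
  have finG: "finite (ground n)" by (simp add: ground_def)
  have "(\<Sum>v\<in>ground n - J. derivJ n \<pi> (insert v J))
      = (\<Sum>v\<in>ground n - J. \<Sum>S\<in>A. if v \<in> S then \<pi> S else 0)"
  proof (rule sum.cong[OF refl])
    fix v
    have "{S. S \<subseteq> ground n \<and> insert v J \<subseteq> S} = {S\<in>A. v \<in> S}" by (auto simp: A_def)
    then show "derivJ n \<pi> (insert v J) = (\<Sum>S\<in>A. if v \<in> S then \<pi> S else 0)"
      unfolding derivJ_def using sum.inter_filter[OF finA, of \<pi> "\<lambda>S. v \<in> S"] by simp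
  qed
  also have "\<dots> = (\<Sum>S\<in>A. \<Sum>v\<in>ground n - J. if v \<in> S then \<pi> S else 0)"
    by (rule sum.swap)
  also have "\<dots> = (\<Sum>S\<in>A. real (r - card J) * \<pi> S)"
  proof (rule sum.cong[OF refl])
    fix S assume S: "S \<in> A"
    have "(\<Sum>v\<in>ground n - J. if v \<in> S then \<pi> S else 0) = real (card ((ground n - J) \<inter> S)) * \<pi> S"
      using sum.inter_filter[of "ground n - J" "\<lambda>_. \<pi> S" "\<lambda>v. v \<in> S"] finG
      by (simp add: Int_def)
    also have "\<dots> = real (r - card J) * \<pi> S"
    proof (cases "\<pi> S = 0")
      case False
      with hom have S_card: "card S = r" and S_ground: "S \<subseteq> ground n"
        by (auto simp: homogeneous_def)
      have "(ground n - J) \<inter> S = S - J" using S_ground by auto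
      moreover have "card (S - J) = card S - card J"
        using S S_ground finG by (auto simp: A_def card_Diff_subset finite_subset)
      ultimately show ?thesis using S_card by simp
    qed simp
    finally show "(\<Sum>v\<in>ground n - J. if v \<in> S then \<pi> S else 0) = real (r - card J) * \<pi> S" .
  qed
  also have "\<dots> = real (r - card J) * derivJ n \<pi> J"
    by (simp add: derivJ_def A_def sum_distrib_left)
  finally show ?thesis .
qed

lemma sum_grad1:
  assumes "homogeneous n r \<pi>"
  shows "(\<Sum>i\<in>ground n - J. grad1 n \<pi> J i) = real (r - card J) * derivJ n \<pi> J"
  using sum_derivJ_insert[OF assms] by (simp add: grad1_def)

lemma sum_hess1_row:
  assumes "homogeneous n r \<pi>" and "finite J" and i: "i \<in> ground n - J"
  shows "(\<Sum>j\<in>ground n - J. hess1 n \<pi> J i j) = real (r - card J - 1) * grad1 n \<pi> J i"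
proof -
  have "(\<Sum>j\<in>ground n - J. hess1 n \<pi> J i j) = (\<Sum>j\<in>ground n - J - {i}. hess1 n \<pi> J i j)"
    using i by (simp add: sum.remove ground_def hess1_def)
  also have "\<dots> = (\<Sum>j\<in>ground n - insert i J. derivJ n \<pi> (insert j (insert i J)))"
    by (rule sum.cong) (use i in \<open>auto simp: hess1_def insert_commute\<close>)
  also have "\<dots> = real (r - card (insert i J)) * grad1 n \<pi> J i"
    using sum_derivJ_insert[OF assms(1)] i by (simp add: grad1_def)
  finally show ?thesis using i \<open>finite J\<close> by simp
qed

lemma hess1_symmetric: "hess1 n \<pi> J i j = hess1 n \<pi> J j i"
  by (auto simp: hess1_def insert_commute)

text \<open>Strong log-concavity at J, multiplied through by p^2 > 0.\<close>

lemma hess1_quadratic_le_grad1_square: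
  assumes slc: "strongly_log_concave n \<pi>" and J: "J \<subseteq> ground n"
    and p: "0 < derivJ n \<pi> J"
  shows "(\<Sum>i\<in>ground n - J. \<Sum>j\<in>ground n - J. v i * hess1 n \<pi> J i j * v j) * derivJ n \<pi> J
           \<le> (\<Sum>i\<in>ground n - J. grad1 n \<pi> J i * v i)\<^sup>2"
    (is "?Q * ?p \<le> ?S\<^sup>2")
proof -
  let ?A = "ground n - J" and ?h = "hess1 n \<pi> J" and ?g = "grad1 n \<pi> J"
  have finG: "finite (ground n)" by (simp add: ground_def)
  have vanish: "loghess n \<pi> J i j = 0" if "i \<in> J \<or> j \<in> J" for i j
    using that by (auto simp: loghess_def hess1_def grad1_def)
  have "(\<Sum>i\<in>ground n. \<Sum>j\<in>ground n. v i * loghess n \<pi> J i j * v j) \<le> 0"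
    using slc J unfolding strongly_log_concave_def by blast
  also have "(\<Sum>i\<in>ground n. \<Sum>j\<in>ground n. v i * loghess n \<pi> J i j * v j)
           = (\<Sum>i\<in>ground n. \<Sum>j\<in>?A. v i * loghess n \<pi> J i j * v j)"
    by (rule sum.cong[OF refl], rule sum.mono_neutral_right) (use finG vanish in auto)
  also have "\<dots> = (\<Sum>i\<in>?A. \<Sum>j\<in>?A. v i * loghess n \<pi> J i j * v j)"
    by (rule sum.mono_neutral_right) (use finG vanish in auto)
  also have "\<dots> = (\<Sum>i\<in>?A. \<Sum>j\<in>?A. v i * ?h i j * v j / ?p - (?g i * v i) * (?g j * v j) / ?p\<^sup>2)"
    by (simp only: loghess_def right_diff_distrib left_diff_distrib
        times_divide_eq_right times_divide_eq_left mult_ac)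
  also have "\<dots> = ?Q / ?p - (\<Sum>i\<in>?A. \<Sum>j\<in>?A. (?g i * v i) * (?g j * v j)) / ?p\<^sup>2"
    by (simp only: sum_subtractf sum_divide_distrib)
  also have "(\<Sum>i\<in>?A. \<Sum>j\<in>?A. (?g i * v i) * (?g j * v j)) = ?S\<^sup>2"
    by (simp only: power2_eq_square sum_product)
  finally have "?Q / ?p \<le> ?S\<^sup>2 / ?p\<^sup>2" by simp
  have "?Q * ?p = ?Q / ?p * ?p\<^sup>2" using p by (simp add: power2_eq_square)
  also have "\<dots> \<le> ?S\<^sup>2 / ?p\<^sup>2 * ?p\<^sup>2"
    using \<open>?Q / ?p \<le> ?S\<^sup>2 / ?p\<^sup>2\<close> by (rule mult_right_mono) simp
  also have "\<dots> = ?S\<^sup>2" using p by simp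
  finally show ?thesis .
qed

lemma quadratic_form_shift:
  fixes h :: "'a \<Rightarrow> 'a \<Rightarrow> real"
  assumes sym: "\<And>i j. h i j = h j i"
  shows "(\<Sum>i\<in>A. \<Sum>j\<in>A. f i * h i j * f j)
       = (\<Sum>i\<in>A. \<Sum>j\<in>A. h i j) + 2 * (\<Sum>i\<in>A. (f i - 1) * (\<Sum>j\<in>A. h i j))
         + (\<Sum>i\<in>A. \<Sum>j\<in>A. (f i - 1) * h i j * (f j - 1))"
proof -
  have swap: "(\<Sum>i\<in>A. \<Sum>j\<in>A. h i j * (f j - 1)) = (\<Sum>i\<in>A. (f i - 1) * (\<Sum>j\<in>A. h i j))"
    using sum.swap[of "\<lambda>i j. h i j * (f j - 1)" A A] by (simp add: sym sum_distrib_left mult.commute)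
  have "f i * h i j * f j = h i j + (f i - 1) * h i j + h i j * (f j - 1) + (f i - 1) * h i j * (f j - 1)"
    for i j by (simp add: algebra_simps)
  then show ?thesis
    by (simp add: sum.distrib swap sum_distrib_left[symmetric])
qed

lemma hess1_quadratic_le:
  assumes hom: "homogeneous n r \<pi>" and slc: "strongly_log_concave n \<pi>"
    and J: "J \<subseteq> ground n" and p: "0 < derivJ n \<pi> J"
    and normalised: "(\<Sum>i\<in>ground n - J. grad1 n \<pi> J i * f i) = real (r - card J) * derivJ n \<pi> J"
  shows "(\<Sum>i\<in>ground n - J. \<Sum>j\<in>ground n - J. f i * hess1 n \<pi> J i j * f j)
           \<le> real (r - card J) * real (r - card J - 1) * derivJ n \<pi> J"
proof -
  let ?A = "ground n - J" and ?k = "r - card J"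
  let ?h = "hess1 n \<pi> J" and ?g = "grad1 n \<pi> J"
  have finJ: "finite J" using J finite_subset by (auto simp: ground_def)
  have rows: "(\<Sum>j\<in>?A. ?h i j) = real (?k - 1) * ?g i" if "i \<in> ?A" for i
    using sum_hess1_row[OF hom finJ that] .
  have orth: "(\<Sum>i\<in>?A. ?g i * (f i - 1)) = 0"
    unfolding right_diff_distrib sum_subtractf normalised mult_1_right sum_grad1[OF hom] by simp
  have total: "(\<Sum>i\<in>?A. \<Sum>j\<in>?A. ?h i j) = real ?k * real (?k - 1) * derivJ n \<pi> J"
  proof -
    have "(\<Sum>i\<in>?A. \<Sum>j\<in>?A. ?h i j) = (\<Sum>i\<in>?A. real (?k - 1) * ?g i)"
      by (rule sum.cong[OF refl]) (rule rows)
    also have "\<dots> = real (?k - 1) * (\<Sum>i\<in>?A. ?g i)"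
      by (simp add: sum_distrib_left)
    finally show ?thesis by (simp add: sum_grad1[OF hom])
  qed
  have linear: "(\<Sum>i\<in>?A. (f i - 1) * (\<Sum>j\<in>?A. ?h i j)) = 0"
  proof -
    have "(\<Sum>i\<in>?A. (f i - 1) * (\<Sum>j\<in>?A. ?h i j)) = (\<Sum>i\<in>?A. real (?k - 1) * (?g i * (f i - 1)))"
      by (rule sum.cong[OF refl]) (simp add: rows)
    also have "\<dots> = real (?k - 1) * (\<Sum>i\<in>?A. ?g i * (f i - 1))"
      by (simp add: sum_distrib_left)
    finally show ?thesis using orth by simp
  qed
  have "(\<Sum>i\<in>?A. \<Sum>j\<in>?A. (f i - 1) * ?h i j * (f j - 1)) * derivJ n \<pi> J \<le> 0"
    using hess1_quadratic_le_grad1_square[OF slc J p, of "\<lambda>i. f i - 1"] orth by simp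
  then have "(\<Sum>i\<in>?A. \<Sum>j\<in>?A. (f i - 1) * ?h i j * (f j - 1)) \<le> 0"
    using p by (simp add: mult_le_0_iff)
  then show ?thesis
    unfolding quadratic_form_shift[OF hess1_symmetric, of f] total linear by simp
qed

theorem lemma2p4:
  fixes n r :: nat and Z :: real and \<pi> :: "nat set \<Rightarrow> real"
    and I :: "nat set" and f :: "nat \<Rightarrow> real"
  assumes "homogeneous n r \<pi>"
    and "strongly_log_concave n \<pi>"
    and "(\<Sum>S\<in>Pow (ground n). \<pi> S) = 1"
    and "Z > 0"
    and "indep \<pi> I"
    and "card I + 2 \<le> r"
    and "expect_link n r Z \<pi> I f = 1"
  shows "quad_W n r Z \<pi> I f \<le> weight n r Z \<pi> I"
proof -
  note hom = assms(1)
  let ?A = "ground n - I" and ?k = "r - card I" and ?p = "derivJ n \<pi> I"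
  have nonneg: "\<And>S. 0 \<le> \<pi> S" using assms(2) by (simp add: strongly_log_concave_def)
  have I: "I \<subseteq> ground n" using assms(5) hom by (auto simp: indep_def bases_def homogeneous_def)
  then have finI: "finite I" by (rule finite_subset) (simp add: ground_def)
  have p: "0 < ?p" using derivJ_pos_if_indep[OF hom nonneg assms(5)] .
  have fact_k: "fact ?k = real ?k * fact (?k - 1)" "fact (?k - 1) = real (?k - 1) * fact (?k - 2)"
    using assms(6) by (simp_all add: fact_reduce)
  have wI: "weight n r Z \<pi> I = fact ?k * Z * ?p"
    by (simp add: weight_eq_derivJ[OF hom])
  have wv: "weight n r Z \<pi> (insert v I) = fact (?k - 1) * Z * grad1 n \<pi> I v" if "v \<in> ?A" for v
    using that finI by (simp add: weight_eq_derivJ[OF hom] grad1_def)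
  have W: "Wmat n r Z \<pi> I u v = fact (?k - 2) * Z * hess1 n \<pi> I u v" if "u \<in> ?A" "v \<in> ?A" for u v
    using that finI by (auto simp: Wmat_def weight_eq_derivJ[OF hom] hess1_def)
  have "1 = (\<Sum>v\<in>?A. grad1 n \<pi> I v * f v) / (real ?k * ?p)"
    using assms(7) assms(4) by (simp add: expect_link_def link_dist_def wI wv fact_k sum_divide_distrib)
  then have "(\<Sum>v\<in>?A. grad1 n \<pi> I v * f v) = real ?k * ?p"
    using p assms(6) by (simp add: field_simps)
  note core = hess1_quadratic_le[OF hom assms(2) I p this]
  have "quad_W n r Z \<pi> I f = fact (?k - 2) * Z * (\<Sum>i\<in>?A. \<Sum>j\<in>?A. f i * hess1 n \<pi> I i j * f j)"
    unfolding quad_W_def sum_distrib_left by (intro sum.cong refl) (simp add: W)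
  also have "\<dots> \<le> fact (?k - 2) * Z * (real ?k * real (?k - 1) * ?p)"
    using core assms(4) by (intro mult_left_mono) simp_all
  also have "\<dots> = weight n r Z \<pi> I" unfolding wI fact_k by (simp only: mult_ac)
  finally show ?thesis .
qed

end
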